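(* Consider the algorithm described below (Algorithm A) for a real Hilbert space $H$, a nonempty closed convex set $C\subseteq H$ and a mapping $F\colon H\to H$ that is monotone and Lipschitz continuous with constant $L>0$, where the variational inequality "find $x^*\in C$ with $\langle F(x^* ),x-x^*\rangle\ge0$ for all $x\in C$" has nonempty solution set $S$. Suppose that at some iteration $n\ge1$ the algorithm reaches Step 4(ii), i.e. $t_n>0$ and $\lambda_n<\lambda_{n-1}$. Then there exists $\theta_n'\in(0,1]$ such that, with $y_n'=x_n+\theta_n'(x_n-x_{n-1})$, one has $\lambda(y_n',\theta_n')\ge\theta_n'\lambda_{n-1}$, and there exists $\lambda_n'\in[\theta_n'\lambda_{n-1},\lambda(y_n',\theta_n')]$ with $\|\lambda_n'F(y_n')-\theta_n'\lambda_{n-1}F(y_{n-1})\|\le\alpha\|y_n'-y_{n-1}\|$ (so Step 4(ii) is well-defined).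
   Context: Convention: $0/0=+\infty$ and $1/0=+\infty$. $P_C$ is the metric projection onto $C$. Algorithm A: Step 1. Choose $x_0\in C$, $\lambda_{-1}>0$, $\theta_0=1$, $\alpha\in(0,\sqrt2-1)$ and $\bar\lambda>0$. Compute $y_0=P_C(x_0-\lambda_{-1}F(x_0))$, $\lambda_0=\min\{\alpha\|x_0-y_0\|/\|F(x_0)-F(y_0)\|,\bar\lambda\}$, $x_1=P_C(x_0-\lambda_0F(y_0))$. Step 2 (for $n\ge1$). Set $\theta_n=1$ and define, for $y\in H$, $\theta>0$, $\lambda(y,\theta)=\min\{\alpha\|y-y_{n-1}\|/\|F(y)-F(y_{n-1})\|,\ \frac{1+\theta_{n-1}}{\theta}\lambda_{n-1},\ \bar\lambda\}$. Compute $y_n=2x_n-x_{n-1}$, $\lambda_n=\lambda(y_n,\theta_n)$, $x_{n+1}=P_C(x_n-\lambda_nF(y_n))$. Step 3. If $\|y_n-P_C(x_n-\lambda_nF(y_n))\|+\|x_n-y_n\|=0$, stop ($x_n$ is a solution). Otherwise compute $t_n=-\|x_{n+1}-x_n\|^2+2\lambda_n\langle F(y_n),y_n-x_{n+1}\rangle+(1-\alpha(1+\sqrt2))\|x_n-y_n\|^2-\alpha\|x_n-y_{n-1}\|^2+(1-\sqrt2\alpha)\|x_{n+1}-y_n\|^2$. Step 4. If $t_n\le0$, go to Step 2 with $n:=n+1$. Otherwise: (i) if $\lambda_n\ge\lambda_{n-1}$, choose $\lambda_n'\in[\lambda_{n-1},\lambda_n]$ with $\|\lambda_n'F(y_n)-\lambda_{n-1}F(y_{n-1})\|\le\alpha\|y_n-y_{n-1}\|$,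 recompute $x_{n+1}=P_C(x_n-\lambda_n'F(y_n))$, set $\lambda_n:=\lambda_n'$, $n:=n+1$, go to Step 2; (ii) if $\lambda_n<\lambda_{n-1}$, find $\theta_n'\in(0,1]$ such that, with $y_n'=x_n+\theta_n'(x_n-x_{n-1})$, one has $\lambda(y_n',\theta_n')\ge\theta_n'\lambda_{n-1}$; then choose $\lambda_n'\in[\theta_n'\lambda_{n-1},\lambda(y_n',\theta_n')]$ with $\|\lambda_n'F(y_n')-\theta_n'\lambda_{n-1}F(y_{n-1})\|\le\alpha\|y_n'-y_{n-1}\|$, recompute $x_{n+1}=P_C(x_n-\lambda_n'F(y_n'))$, set $\lambda_n:=\lambda_n'$, $\theta_n:=\theta_n'$, $y_n:=y_n'$, $n:=n+1$, go to Step 2. *)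

theory Defs
  imports "HOL-Analysis.Analysis"
begin

text \<open>Metric projection onto C (nearest point; unique for nonempty closed convex C in a Hilbert space).\<close>
definition metric_proj :: "'a::real_inner set \<Rightarrow> 'a \<Rightarrow> 'a" where
  "metric_proj C x = (SOME p. p \<in> C \<and> (\<forall>z\<in>C. dist x p \<le> dist x z))"

text \<open>The quotient alpha*norm(u - v)/norm(F u - F v) with the convention 0/0 = 1/0 = +infinity,
  appearing inside a minimum with a finite positive term b: result is min of the quotient and b.\<close>
definition min_ratio :: "('a::real_normed_vector \<Rightarrow> 'a) \<Rightarrow> real \<Rightarrow> 'a \<Rightarrow> 'a \<Rightarrow> real \<Rightarrow> real" where
  "min_ratio F alpha u v b =
     (if F u = F v then b else min (alpha * norm (u - v) / norm (F u - F v)) b)"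

text \<open>lambda(y, theta) of Step 2, relative to previous data y_{n-1}, lambda_{n-1}, theta_{n-1}.\<close>
definition stepsize :: "('a::real_normed_vector \<Rightarrow> 'a) \<Rightarrow> real \<Rightarrow> real \<Rightarrow> 'a \<Rightarrow> real \<Rightarrow> real \<Rightarrow> 'a \<Rightarrow> real \<Rightarrow> real" where
  "stepsize F alpha lbar yp lp thp y th =
     min_ratio F alpha y yp (min ((1 + thp) / th * lp) lbar)"

text \<open>The quantity t_n of Step 3, with data x_{n-1}... :
  xn = x_n, yn = y_n, yp = y_{n-1}, xn1 = x_{n+1}, lnn = lambda_n.\<close>
definition t_val :: "('a::real_inner \<Rightarrow> 'a) \<Rightarrow> real \<Rightarrow> 'a \<Rightarrow> 'a \<Rightarrow> 'a \<Rightarrow> 'a \<Rightarrow> real \<Rightarrow> real" where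
  "t_val F alpha xn yn yp xn1 lnn =
     - (norm (xn1 - xn))\<^sup>2 + 2 * lnn * inner (F yn) (yn - xn1)
     + (1 - alpha * (1 + sqrt 2)) * (norm (xn - yn))\<^sup>2 - alpha * (norm (xn - yp))\<^sup>2
     + (1 - sqrt 2 * alpha) * (norm (xn1 - yn))\<^sup>2"

definition algA_init where
  "algA_init C F alpha lbar lm1 x y lam theta \<longleftrightarrow>
     x 0 \<in> C \<and> theta 0 = 1 \<and>
     y 0 = metric_proj C (x 0 - lm1 *\<^sub>R F (x 0)) \<and>
     lam 0 = min_ratio F alpha (x 0) (y 0) lbar \<and>
     x 1 = metric_proj C (x 0 - lam 0 *\<^sub>R F (y 0))"

text \<open>Iteration n \<ge> 1 (Steps 2-4, not stopping at Step 3), producing y_n, lambda_n, theta_n, x_{n+1}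
  from the earlier values.  The Step 4 choices are nondeterministic: any admissible choice is allowed.\<close>
definition algA_step where
  "algA_step C F alpha lbar x y lam theta n \<longleftrightarrow>
    (let yb = 2 *\<^sub>R x n - x (n - 1);
         lb = stepsize F alpha lbar (y (n - 1)) (lam (n - 1)) (theta (n - 1)) yb 1;
         xb = metric_proj C (x n - lb *\<^sub>R F yb);
         tn = t_val F alpha (x n) yb (y (n - 1)) xb lb
     in norm (yb - xb) + norm (x n - yb) \<noteq> 0 \<and>
        ((tn \<le> 0 \<and> y n = yb \<and> lam n = lb \<and> theta n = 1 \<and> x (Suc n) = xb) \<or>
         (tn > 0 \<and> lb \<ge> lam (n - 1) \<and> y n = yb \<and> theta n = 1 \<and>
            lam (n - 1) \<le> lam n \<and> lam n \<le> lb \<and>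
            norm (lam n *\<^sub>R F yb - lam (n - 1) *\<^sub>R F (y (n - 1))) \<le> alpha * norm (yb - y (n - 1)) \<and>
            x (Suc n) = metric_proj C (x n - lam n *\<^sub>R F yb)) \<or>
         (tn > 0 \<and> lb < lam (n - 1) \<and> 0 < theta n \<and> theta n \<le> 1 \<and>
            y n = x n + theta n *\<^sub>R (x n - x (n - 1)) \<and>
            stepsize F alpha lbar (y (n - 1)) (lam (n - 1)) (theta (n - 1)) (y n) (theta n)
               \<ge> theta n * lam (n - 1) \<and>
            theta n * lam (n - 1) \<le> lam n \<and>
            lam n \<le> stepsize F alpha lbar (y (n - 1)) (lam (n - 1)) (theta (n - 1)) (y n) (theta n) \<and>
            norm (lam n *\<^sub>R F (y n) - (theta n * lam (n - 1)) *\<^sub>R F (y (n - 1)))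
               \<le> alpha * norm (y n - y (n - 1)) \<and>
            x (Suc n) = metric_proj C (x n - lam n *\<^sub>R F (y n)))))"

end

theory Submission
  imports Defs
begin

text \<open>Lipschitz continuity bounds the ratio \<open>alpha \<parallel>u - v\<parallel> / \<parallel>F u - F v\<parallel>\<close> below by
  \<open>alpha / L\<close>, so every step size is at least \<open>min (alpha / L) lbar\<close> times a positive factor
  and all \<open>lam k\<close> stay positive. Then \<open>\<theta>' = min 1 (min (alpha / L) lbar / lam (n - 1))\<close>
  and \<open>\<lambda>' = \<theta>' lam (n - 1)\<close> work: \<open>\<lambda>'\<close> lies below each of the three terms of
  \<open>\<lambda>(y', \<theta>')\<close>, and \<open>\<lambda>' L \<le> alpha\<close> gives the required estimate.\<close>

lemma min_ratio_ge_Lipschitz: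
  fixes F :: "'a::real_normed_vector \<Rightarrow> 'a"
  assumes "L > 0" "alpha > 0" "\<forall>u v. norm (F u - F v) \<le> L * norm (u - v)"
  shows "min (alpha / L) b \<le> min_ratio F alpha u v b"
proof (cases "F u = F v")
  case True
  then show ?thesis by (simp add: min_ratio_def)
next
  case False
  have "norm (F u - F v) > 0" using False by simp
  moreover have "norm (F u - F v) \<le> L * norm (u - v)" using assms(3) by blast
  ultimately have "alpha / L \<le> alpha * norm (u - v) / norm (F u - F v)"
    using assms(1,2) by (simp add: divide_simps mult.commute mult_left_mono)
  then show ?thesis using False by (simp add: min_ratio_def)
qed

lemma stepsize_ge_scaled:
  fixes F :: "'a::real_normed_vector \<Rightarrow> 'a"
  assumes "L > 0" "alpha > 0" "\<forall>u v. norm (F u - F v) \<le> L * norm (u - v)"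
    and "lp > 0" "thp \<ge> 0" "0 < th" "th \<le> 1"
    and "th * lp \<le> min (alpha / L) lbar"
  shows "th * lp \<le> stepsize F alpha lbar yp lp thp y th"
proof -
  have "th * th \<le> 1 + thp"
    using assms(5-7) by (smt (verit) mult_le_one)
  then have "th \<le> (1 + thp) / th"
    using assms(6) by (simp add: divide_simps)
  then have "th * lp \<le> (1 + thp) / th * lp"
    using assms(4) by (intro mult_right_mono) auto
  moreover have "min (alpha / L) (min ((1 + thp) / th * lp) lbar)
      \<le> stepsize F alpha lbar yp lp thp y th"
    unfolding stepsize_def using assms(1-3) by (rule min_ratio_ge_Lipschitz)
  ultimately show ?thesis using assms(8) by linarith
qed

lemma norm_scaled_diff_le_Lipschitz:
  fixes F :: "'a::real_normed_vector \<Rightarrow> 'a"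
  assumes "L > 0" "\<forall>u v. norm (F u - F v) \<le> L * norm (u - v)"
    and "c \<ge> 0" "c \<le> alpha / L"
  shows "norm (c *\<^sub>R F u - c *\<^sub>R F v) \<le> alpha * norm (u - v)"
proof -
  have "norm (c *\<^sub>R F u - c *\<^sub>R F v) = c * norm (F u - F v)"
    using assms(3) by (simp flip: scaleR_diff_right)
  also have "\<dots> \<le> c * (L * norm (u - v))"
    using assms(2,3) by (intro mult_left_mono) auto
  also have "\<dots> \<le> (alpha / L) * (L * norm (u - v))"
    using assms(1,4) by (intro mult_right_mono) auto
  also have "\<dots> = alpha * norm (u - v)"
    using assms(1) by simp
  finally show ?thesis .
qed

lemma algA_lam_theta_pos:
  fixes F :: "'a::real_inner \<Rightarrow> 'a"
  assumes "L > 0" "alpha > 0" "\<forall>u v. norm (F u - F v) \<le> L * norm (u - v)" "lbar > 0"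
    and init: "algA_init C F alpha lbar lm1 x y lam theta"
    and run: "\<forall>k. 1 \<le> k \<and> k < n \<longrightarrow> algA_step C F alpha lbar x y lam theta k"
    and "k < n"
  shows "lam k > 0 \<and> 0 < theta k \<and> theta k \<le> 1"
  using \<open>k < n\<close>
proof (induction k)
  case 0
  have "0 < min (alpha / L) lbar"
    using assms(1,2,4) by simp
  also have "\<dots> \<le> lam 0"
    using init min_ratio_ge_Lipschitz[OF assms(1-3)] unfolding algA_init_def by metis
  finally show ?case
    using init unfolding algA_init_def by simp
next
  case (Suc k)
  then have IH: "lam k > 0" "0 < theta k" "theta k \<le> 1" by auto
  define yb where "yb = 2 *\<^sub>R x (Suc k) - x k"
  define lb where "lb = stepsize F alpha lbar (y k) (lam k) (theta k) yb 1"
  have "0 < min (alpha / L) (min ((1 + theta k) / 1 * lam k) lbar)"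
    using IH assms(1,2,4) by simp
  also have "\<dots> \<le> lb"
    unfolding lb_def stepsize_def using assms(1-3) by (rule min_ratio_ge_Lipschitz)
  finally have "lb > 0" .
  moreover have "algA_step C F alpha lbar x y lam theta (Suc k)"
    using run Suc.prems by auto
  then have "(lam (Suc k) = lb \<and> theta (Suc k) = 1)
      \<or> (theta (Suc k) = 1 \<and> lam k \<le> lam (Suc k))
      \<or> (0 < theta (Suc k) \<and> theta (Suc k) \<le> 1 \<and> theta (Suc k) * lam k \<le> lam (Suc k))"
    unfolding algA_step_def Let_def yb_def lb_def by (simp only: diff_Suc_1) auto
  ultimately show ?case
    using IH by (smt (verit) mult_pos_pos)
qed

theorem lemma4p4:
  fixes C :: "'a::{real_inner, complete_space} set"
    and F :: "'a \<Rightarrow> 'a"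
    and L alpha lbar lm1 :: real
    and x y :: "nat \<Rightarrow> 'a"
    and lam theta :: "nat \<Rightarrow> real"
    and n :: nat
  assumes C: "C \<noteq> {}" "closed C" "convex C"
    and mono: "\<forall>u v. inner (F u - F v) (u - v) \<ge> 0"
    and lip: "L > 0" "\<forall>u v. norm (F u - F v) \<le> L * norm (u - v)"
    and sol: "\<exists>xs\<in>C. \<forall>z\<in>C. inner (F xs) (z - xs) \<ge> 0"
    and par: "0 < alpha" "alpha < sqrt 2 - 1" "lbar > 0" "lm1 > 0"
    and init: "algA_init C F alpha lbar lm1 x y lam theta"
    and run: "\<forall>k. 1 \<le> k \<and> k < n \<longrightarrow> algA_step C F alpha lbar x y lam theta k"
    and n: "n \<ge> 1"
    and reach: "let yb = 2 *\<^sub>R x n - x (n - 1);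
         lb = stepsize F alpha lbar (y (n - 1)) (lam (n - 1)) (theta (n - 1)) yb 1;
         xb = metric_proj C (x n - lb *\<^sub>R F yb)
       in norm (yb - xb) + norm (x n - yb) \<noteq> 0 \<and>
          t_val F alpha (x n) yb (y (n - 1)) xb lb > 0 \<and> lb < lam (n - 1)"
  shows "\<exists>th. 0 < th \<and> th \<le> 1 \<and>
           (let y' = x n + th *\<^sub>R (x n - x (n - 1));
                ly = stepsize F alpha lbar (y (n - 1)) (lam (n - 1)) (theta (n - 1)) y' th
            in ly \<ge> th * lam (n - 1) \<and>
               (\<exists>l'. th * lam (n - 1) \<le> l' \<and> l' \<le> ly \<and>
                  norm (l' *\<^sub>R F y' - (th * lam (n - 1)) *\<^sub>R F (y (n - 1)))
                    \<le> alpha * norm (y' - y (n - 1))))"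
proof -
  define lp where "lp = lam (n - 1)"
  define m where "m = min (alpha / L) lbar"
  define th where "th = min 1 (m / lp)"
  have lp: "lp > 0" and thp: "theta (n - 1) > 0"
    using algA_lam_theta_pos[OF lip(1) par(1) lip(2) par(3) init run, of "n - 1"] n
    unfolding lp_def by auto
  have th: "0 < th" "th \<le> 1"
    using lp lip(1) par(1,3) unfolding th_def m_def by auto
  have thl: "th * lp \<le> m"
    using lp by (simp add: th_def min_mult_distrib_right)
  have "th * lp \<le> stepsize F alpha lbar (y (n - 1)) lp (theta (n - 1)) y' th" for y'
    using stepsize_ge_scaled[OF lip(1) par(1) lip(2) lp _ th] thp thl unfolding m_def by simp
  moreover have "norm ((th * lp) *\<^sub>R F y' - (th * lp) *\<^sub>R F y'') \<le> alpha * norm (y' - y'')" for y' y''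
    using norm_scaled_diff_le_Lipschitz[OF lip] th lp thl unfolding m_def by simp
  ultimately show ?thesis
    using th unfolding Let_def lp_def by (intro exI[of _ th]) auto
qed

end
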